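(* Let $S(\mathbf x)$ be the $12\times 34$ symbolic matrix whose entry in row $i$ and column $j$ is a distinct variable if $j$ belongs to the list $R_i$ below and $0$ otherwise: $R_1=\{4,5,6,14,15,16,17,18,19,20,21\}$, $R_2=\{4,7,8,9,14,15,16,17,22,23,24,25\}$, $R_3=\{7,10,11,14,15,18,19,22,26,27\}$, $R_4=\{5,12,13,16,17,20,23,24,28,29,30\}$, $R_5=\{8,10,12,22,23,26,28,29,31,32,33\}$, $R_6=\{1,11,13,18,20,27,30,34\}$, $R_7=\{2,9,24,25,30,31,34\}$, $R_8=\{3,6,19,21,26,31,32,33,34\}$, $R_9=\{1,4,8,21,25,28,32,33\}$, $R_{10}=\{2,5,10,14,18,19,21,27,28,29,32\}$, $R_{11}=\{3,7,13,16,23,24,25,27,29\}$, $R_{12}=\{6,9,11,12,15,17,20,22,26,30,31,33,34\}$ (this is the symbolic slack matrix of the Perles polytope, an $8$-dimensional polytope with $12$ vertices and $34$ facets). Let $x_1,\dots,x_{120}$ be its variables. Then the slack ideal $$I=\langle 10\text{-minors of } S(\mathbf x)\rangle : (x_1x_2\cdots x_{120})^\infty\subseteq\mathbb{C}[x_1,\dots,x_{120}]$$ is not a prime ideal.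
   Context: The Perles polytope is the classical $8$-dimensional polytope with $12$ vertices and $34$ facets which is projectively unique and has no rational realization; it is defined by an affine Gale diagram consisting of the points $A,B,C,D,E,F,G,H$ (positive) and $F,G,H,I$ (negative) built from a regular pentagon and its pentagram, with $E,F,H,G$ four vertices of the pentagon, $I$ its center, and $A,B,C,D$ four tips of the pentagram. Its vertices are labelled $A,B,C,D,E,F,G,H,-F,-G,-H,-I$ (rows $1$ to $12$ above) and its $34$ facets (columns) correspond to the minimal positive circuits of the Gale diagram; the entry in row $i$, column $j$ of the slack matrix is nonzero exactly when the vertex $i$ does not lie on facet $j$, which is the pattern given in the claim. For a $d$-polytope, the slack ideal is the ideal of $(d+2)$-minors of the symbolic slack matrix saturated by the product of all variables; here $d=8$. *)

theory Defs
  imports Complex_Main "HOL-Library.Poly_Mapping" "Jordan_Normal_Form.Determinant"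
    "Jordan_Normal_Form.DL_Submatrix"
begin

text \<open>Multivariate polynomials over the complex numbers: variables are indexed by
  natural numbers; a monomial is a finitely supported exponent vector.\<close>
type_synonym mpoly = "(nat \<Rightarrow>\<^sub>0 nat) \<Rightarrow>\<^sub>0 complex"

definition Var :: "nat \<Rightarrow> mpoly" where
  "Var i = Poly_Mapping.single (Poly_Mapping.single i 1) 1"

text \<open>The polynomial ring in the variables with index in a set V
  (used with V = {..<120}, i.e. x_1,...,x_120 are Var 0,...,Var 119).\<close>
definition poly_ring :: "nat set \<Rightarrow> mpoly set" where
  "poly_ring V = {p. \<forall>m\<in>Poly_Mapping.keys p. Poly_Mapping.keys m \<subseteq> V}"

definition ideal_gen_in :: "mpoly set \<Rightarrow> mpoly set \<Rightarrow> mpoly set" where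
  "ideal_gen_in P G = {\<Sum>g\<in>F. c g * g | F c. finite F \<and> F \<subseteq> G \<and> (\<forall>g\<in>F. c g \<in> P)}"

definition saturation_in :: "mpoly set \<Rightarrow> mpoly set \<Rightarrow> mpoly \<Rightarrow> mpoly set" where
  "saturation_in P J h = {f \<in> P. \<exists>k::nat. h ^ k * f \<in> J}"

definition prime_ideal_in :: "mpoly set \<Rightarrow> mpoly set \<Rightarrow> bool" where
  "prime_ideal_in P I \<longleftrightarrow> I \<subseteq> P \<and> I \<noteq> P \<and>
     (\<forall>a\<in>P. \<forall>b\<in>P. a * b \<in> I \<longrightarrow> a \<in> I \<or> b \<in> I)"

text \<open>Support pattern of the slack matrix of the Perles polytope: row i (1-based, as in
  the paper, i = 1..12) lists the 1-based columns j (1..34) with a nonzero entry.\<close>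
definition perles_rows :: "nat list list" where
  "perles_rows =
   [[4,5,6,14,15,16,17,18,19,20,21],
    [4,7,8,9,14,15,16,17,22,23,24,25],
    [7,10,11,14,15,18,19,22,26,27],
    [5,12,13,16,17,20,23,24,28,29,30],
    [8,10,12,22,23,26,28,29,31,32,33],
    [1,11,13,18,20,27,30,34],
    [2,9,24,25,30,31,34],
    [3,6,19,21,26,31,32,33,34],
    [1,4,8,21,25,28,32,33],
    [2,5,10,14,18,19,21,27,28,29,32],
    [3,7,13,16,23,24,25,27,29],
    [6,9,11,12,15,17,20,22,26,30,31,33,34]]"

text \<open>Support predicate with 0-based row i < 12 and 0-based column j < 34.\<close>
definition perles_supp :: "nat \<Rightarrow> nat \<Rightarrow> bool" where
  "perles_supp i j \<longleftrightarrow> i < 12 \<and> j < 34 \<and> Suc j \<in> set (perles_rows ! i)"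

text \<open>Index of the variable at a support entry: entries are numbered 0,1,...,119
  in row-major order.\<close>
definition perles_var_index :: "nat \<Rightarrow> nat \<Rightarrow> nat" where
  "perles_var_index i j =
     (\<Sum>r<i. card {c. c < 34 \<and> perles_supp r c}) + card {c. c < j \<and> perles_supp i c}"

definition perles_slack :: "mpoly mat" where
  "perles_slack = mat 12 34 (\<lambda>(i,j). if perles_supp i j then Var (perles_var_index i j) else 0)"

definition minors :: "nat \<Rightarrow> 'a::comm_ring_1 mat \<Rightarrow> 'a set" where
  "minors k A = {det (submatrix A I J) | I J.
      I \<subseteq> {..<dim_row A} \<and> J \<subseteq> {..<dim_col A} \<and> card I = k \<and> card J = k}"

definition perles_slack_ideal :: "mpoly set" where
  "perles_slack_ideal =
     saturation_in (poly_ring {..<120})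
       (ideal_gen_in (poly_ring {..<120}) (minors 10 perles_slack))
       (\<Prod>i<120. Var i)"

end

(* Among the 10-minors of the symbolic slack matrix are nine of the form \<plusminus>x^F (x^u - x^v) and
   one of the form x^F (a - b + c), with a, b, c monomials. Saturation by the variables cancels
   the monomial factors x^F; multiplying the binomial relations and cancelling once more gives
   a b - c^2, so that a (a - b + c) + (a b - c^2) = a^2 + a c - c^2 lies in the slack ideal.
   Over the complex numbers this quadric factors as (a + \<phi> c) (a + (1 - \<phi>) c), with \<phi> the
   golden ratio. Neither factor lies in the ideal: a rank-9 matrix over \<int>[\<phi>] with the support
   of the slack matrix gives, under the two embeddings of \<int>[\<phi>] into \<complex>, two points of the
   torus at which all 10-minors, hence all elements of the slack ideal, vanish; and a + r c
   vanishes at the point given by \<phi> \<mapsto> r' only if r = r'. *)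

theory Submission
  imports Defs "Jordan_Normal_Form.DL_Rank_Submatrix" "HOL-Library.Product_Lexorder"
begin

subsection \<open>Polynomial rings and their ideals\<close>

lemma poly_ring_add: "p \<in> poly_ring V \<Longrightarrow> q \<in> poly_ring V \<Longrightarrow> p + q \<in> poly_ring V"
  unfolding poly_ring_def using Poly_Mapping.keys_add[of p q] by blast

lemma poly_ring_uminus: "p \<in> poly_ring V \<Longrightarrow> - p \<in> poly_ring V"
  unfolding poly_ring_def by simp

lemma poly_ring_diff: "p \<in> poly_ring V \<Longrightarrow> q \<in> poly_ring V \<Longrightarrow> p - q \<in> poly_ring V"
  using poly_ring_add[of p V "- q"] poly_ring_uminus by simp

lemma poly_ring_mult:
  assumes "p \<in> poly_ring V" "q \<in> poly_ring V"
  shows "p * q \<in> poly_ring V"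
  unfolding poly_ring_def mem_Collect_eq
proof
  fix m assume "m \<in> Poly_Mapping.keys (p * q)"
  then obtain a b where "m = a + b" "a \<in> Poly_Mapping.keys p" "b \<in> Poly_Mapping.keys q"
    using Poly_Mapping.keys_mult[of p q] by auto
  then show "Poly_Mapping.keys m \<subseteq> V"
    using assms Poly_Mapping.keys_add[of a b] unfolding poly_ring_def by blast
qed

definition const_mpoly :: "complex \<Rightarrow> mpoly" where
  "const_mpoly c = Poly_Mapping.single 0 c"

lemma const_mpoly_add: "const_mpoly (a + b) = const_mpoly a + const_mpoly b"
  unfolding const_mpoly_def by (simp add: single_add)

lemma const_mpoly_mult: "const_mpoly (a * b) = const_mpoly a * const_mpoly b"
  unfolding const_mpoly_def by (simp add: mult_single)

lemma const_mpoly_one: "const_mpoly 1 = 1"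
  unfolding const_mpoly_def by simp

lemma const_mpoly_uminus: "const_mpoly (- a) = - const_mpoly a"
  unfolding const_mpoly_def by (simp add: single_uminus)

lemma poly_ring_const_mpoly: "const_mpoly c \<in> poly_ring V"
  unfolding poly_ring_def const_mpoly_def by simp

lemma poly_ring_zero: "0 \<in> poly_ring V"
  unfolding poly_ring_def by simp

lemma poly_ring_one: "1 \<in> poly_ring V"
  unfolding poly_ring_def by simp

lemma poly_ring_of_int: "of_int n \<in> poly_ring V"
  using poly_ring_const_mpoly[of "of_int n"] unfolding const_mpoly_def by simp

lemma Var_neq_0 [simp]: "Var i \<noteq> 0"
  unfolding Var_def by (metis lookup_single_eq lookup_zero one_neq_zero)

lemma poly_ring_Var: "i \<in> V \<Longrightarrow> Var i \<in> poly_ring V"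
  unfolding poly_ring_def Var_def by simp

lemma poly_ring_sum: "(\<And>a. a \<in> A \<Longrightarrow> f a \<in> poly_ring V) \<Longrightarrow> sum f A \<in> poly_ring V"
  using poly_ring_zero[of V]
  by (induction A rule: infinite_finite_induct) (auto intro: poly_ring_add)

lemma poly_ring_prod: "(\<And>a. a \<in> A \<Longrightarrow> f a \<in> poly_ring V) \<Longrightarrow> prod f A \<in> poly_ring V"
  using poly_ring_one[of V]
  by (induction A rule: infinite_finite_induct) (auto intro: poly_ring_mult)

lemma poly_ring_prod_list: "(\<And>x. x \<in> set xs \<Longrightarrow> f x \<in> poly_ring V) \<Longrightarrow> prod_list (map f xs) \<in> poly_ring V"
  using poly_ring_one[of V] by (induction xs) (auto intro: poly_ring_mult)

lemma poly_ring_power: "p \<in> poly_ring V \<Longrightarrow> p ^ k \<in> poly_ring V"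
  using poly_ring_prod[of "{..<k}" "\<lambda>_. p"] by simp

lemma poly_ring_det:
  assumes "\<And>i j. i < dim_row A \<Longrightarrow> j < dim_col A \<Longrightarrow> A $$ (i, j) \<in> poly_ring V"
  shows "det A \<in> poly_ring V"
proof (cases "dim_row A = dim_col A")
  case True
  have "p permutes {0..<dim_row A} \<Longrightarrow> i < dim_row A \<Longrightarrow> p i < dim_col A" for p i
    using True permutes_in_image by fastforce
  then show ?thesis
    unfolding det_def using True
    by (auto intro!: poly_ring_sum poly_ring_mult poly_ring_of_int poly_ring_prod assms)
qed (simp add: det_def poly_ring_zero)

lemma poly_ring_minors:
  assumes "\<And>i j. i < dim_row A \<Longrightarrow> j < dim_col A \<Longrightarrow> A $$ (i, j) \<in> poly_ring V"
  shows "minors k A \<subseteq> poly_ring V"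
proof
  fix d assume "d \<in> minors k A"
  then obtain I J where d: "d = det (submatrix A I J)" "I \<subseteq> {..<dim_row A}" "J \<subseteq> {..<dim_col A}"
    unfolding minors_def by blast
  have "i < card I \<Longrightarrow> pick I i < dim_row A" "j < card J \<Longrightarrow> pick J j < dim_col A" for i j
    using d(2,3) pick_in_set_le by blast+
  moreover have "{i. i < dim_row A \<and> i \<in> I} = I" "{j. j < dim_col A \<and> j \<in> J} = J"
    using d(2,3) by auto
  ultimately show "d \<in> poly_ring V"
    unfolding d(1) by (intro poly_ring_det) (simp add: submatrix_def assms)
qed

definition poly_ideal :: "nat set \<Rightarrow> mpoly set \<Rightarrow> bool" where
  "poly_ideal V I \<longleftrightarrow> I \<subseteq> poly_ring V \<and> 0 \<in> I \<and> (\<forall>a\<in>I. \<forall>b\<in>I. a + b \<in> I)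
     \<and> (\<forall>r\<in>poly_ring V. \<forall>a\<in>I. r * a \<in> I)"

lemma poly_idealI:
  assumes "I \<subseteq> poly_ring V" "0 \<in> I" "\<And>a b. a \<in> I \<Longrightarrow> b \<in> I \<Longrightarrow> a + b \<in> I"
    "\<And>r a. r \<in> poly_ring V \<Longrightarrow> a \<in> I \<Longrightarrow> r * a \<in> I"
  shows "poly_ideal V I"
  using assms unfolding poly_ideal_def by blast

lemma
  assumes "poly_ideal V I"
  shows poly_ideal_subset: "I \<subseteq> poly_ring V"
    and poly_ideal_zero: "0 \<in> I"
    and poly_ideal_add: "a \<in> I \<Longrightarrow> b \<in> I \<Longrightarrow> a + b \<in> I"
    and poly_ideal_mult: "r \<in> poly_ring V \<Longrightarrow> a \<in> I \<Longrightarrow> r * a \<in> I"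
  using assms unfolding poly_ideal_def by blast+

lemma poly_ideal_prod_list_diff:
  assumes I: "poly_ideal V I"
    and ps: "\<And>a b. (a, b) \<in> set ps \<Longrightarrow> a \<in> poly_ring V \<and> b \<in> poly_ring V \<and> a - b \<in> I"
  shows "prod_list (map fst ps) - prod_list (map snd ps) \<in> I"
  using ps
proof (induction ps)
  case Nil
  then show ?case using poly_ideal_zero[OF I] by simp
next
  case (Cons p ps)
  obtain a b where p: "p = (a, b)" by fastforce
  let ?A = "prod_list (map fst ps)" and ?B = "prod_list (map snd ps)"
  have "a * ?A - b * ?B = ?A * (a - b) + b * (?A - ?B)"
    by (simp add: algebra_simps)
  moreover have "?A \<in> poly_ring V"
    using Cons.prems by (intro poly_ring_prod_list) fastforce
  moreover have "b \<in> poly_ring V"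
    using Cons.prems[of a b] p by simp
  ultimately show ?case
    using Cons p by (auto intro!: poly_ideal_add[OF I] poly_ideal_mult[OF I])
qed

lemma ideal_gen_in_generator:
  assumes "g \<in> G"
  shows "g \<in> ideal_gen_in (poly_ring V) G"
  unfolding ideal_gen_in_def using assms poly_ring_one[of V]
  by (intro CollectI exI[of _ "{g}"] exI[of _ "\<lambda>_. 1"]) auto

lemma poly_ideal_ideal_gen_in:
  assumes G: "G \<subseteq> poly_ring V"
  shows "poly_ideal V (ideal_gen_in (poly_ring V) G)" (is "poly_ideal V ?J")
proof (rule poly_idealI)
  show "?J \<subseteq> poly_ring V"
    unfolding ideal_gen_in_def using G by (auto intro!: poly_ring_sum poly_ring_mult)
  show "0 \<in> ?J"
    unfolding ideal_gen_in_def by (intro CollectI exI[of _ "{}"]) auto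
next
  fix a b assume "a \<in> ?J" "b \<in> ?J"
  then obtain F c F' c' where
    a: "a = (\<Sum>g\<in>F. c g * g)" "finite F" "F \<subseteq> G" "\<forall>g\<in>F. c g \<in> poly_ring V" and
    b: "b = (\<Sum>g\<in>F'. c' g * g)" "finite F'" "F' \<subseteq> G" "\<forall>g\<in>F'. c' g \<in> poly_ring V"
    unfolding ideal_gen_in_def by blast
  define d where "d g = (if g \<in> F then c g else 0) + (if g \<in> F' then c' g else 0)" for g
  have "a = (\<Sum>g\<in>F \<union> F'. (if g \<in> F then c g else 0) * g)"
    unfolding a(1) using a(2) b(2) by (intro sum.mono_neutral_cong_left) auto
  moreover have "b = (\<Sum>g\<in>F \<union> F'. (if g \<in> F' then c' g else 0) * g)"
    unfolding b(1) using a(2) b(2) by (intro sum.mono_neutral_cong_left) auto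
  ultimately have "a + b = (\<Sum>g\<in>F \<union> F'. d g * g)"
    unfolding d_def by (simp add: distrib_right sum.distrib)
  moreover have "\<forall>g\<in>F \<union> F'. d g \<in> poly_ring V"
    unfolding d_def using a(4) b(4) poly_ring_zero[of V] by (auto intro: poly_ring_add)
  ultimately show "a + b \<in> ?J"
    unfolding ideal_gen_in_def using a(2,3) b(2,3) by blast
next
  fix r a assume r: "r \<in> poly_ring V" and "a \<in> ?J"
  then obtain F c where a: "a = (\<Sum>g\<in>F. c g * g)" "finite F" "F \<subseteq> G" "\<forall>g\<in>F. c g \<in> poly_ring V"
    unfolding ideal_gen_in_def by blast
  have "r * a = (\<Sum>g\<in>F. (r * c g) * g)"
    unfolding a(1) by (simp add: sum_distrib_left mult.assoc)
  moreover have "\<forall>g\<in>F. r * c g \<in> poly_ring V"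
    using a(4) r by (auto intro: poly_ring_mult)
  ultimately show "r * a \<in> ?J"
    unfolding ideal_gen_in_def using a(2,3)
    by (intro CollectI exI[of _ F] exI[of _ "\<lambda>g. r * c g"]) auto
qed

lemma poly_ideal_saturation_in:
  assumes J: "poly_ideal V J" and h: "h \<in> poly_ring V"
  shows "poly_ideal V (saturation_in (poly_ring V) J h)" (is "poly_ideal V ?S")
proof (rule poly_idealI)
  show "?S \<subseteq> poly_ring V" "0 \<in> ?S"
    unfolding saturation_in_def using poly_ideal_zero[OF J] poly_ring_zero[of V] by auto
next
  fix a b assume "a \<in> ?S" "b \<in> ?S"
  then obtain k l where a: "a \<in> poly_ring V" "h ^ k * a \<in> J" and b: "b \<in> poly_ring V" "h ^ l * b \<in> J"
    unfolding saturation_in_def by blast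
  have "h ^ (k + l) * (a + b) = h ^ l * (h ^ k * a) + h ^ k * (h ^ l * b)"
    by (simp add: power_add algebra_simps)
  also have "\<dots> \<in> J"
    using poly_ideal_mult[OF J poly_ring_power[OF h] a(2)] poly_ideal_mult[OF J poly_ring_power[OF h] b(2)]
    by (rule poly_ideal_add[OF J])
  finally show "a + b \<in> ?S"
    unfolding saturation_in_def using a b by (blast intro: poly_ring_add)
next
  fix r a assume r: "r \<in> poly_ring V" and "a \<in> ?S"
  then obtain k where a: "a \<in> poly_ring V" "h ^ k * a \<in> J"
    unfolding saturation_in_def by blast
  have "h ^ k * (r * a) = r * (h ^ k * a)"
    by (simp add: algebra_simps)
  also have "\<dots> \<in> J"
    using poly_ideal_mult[OF J r a(2)] .
  finally show "r * a \<in> ?S"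
    unfolding saturation_in_def using r a by (blast intro: poly_ring_mult)
qed

lemma subset_saturation_in:
  assumes "poly_ideal V J"
  shows "J \<subseteq> saturation_in (poly_ring V) J h"
  using poly_ideal_subset[OF assms] unfolding saturation_in_def by (auto intro!: exI[of _ 0])

lemma saturation_in_cancel_Var:
  assumes J: "poly_ideal V J" and V: "finite V" "i \<in> V" and p: "p \<in> poly_ring V"
    and ip: "Var i * p \<in> saturation_in (poly_ring V) J (\<Prod>v\<in>V. Var v)"
  shows "p \<in> saturation_in (poly_ring V) J (\<Prod>v\<in>V. Var v)"
proof -
  let ?h = "\<Prod>v\<in>V. Var v" and ?w = "\<Prod>v\<in>V - {i}. Var v"
  obtain k where k: "?h ^ k * (Var i * p) \<in> J"
    using ip unfolding saturation_in_def by blast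
  have "?h = Var i * ?w"
    using V by (simp add: prod.remove)
  then have "?h ^ Suc k * p = ?w * (?h ^ k * (Var i * p))"
    by (simp add: algebra_simps)
  also have "\<dots> \<in> J"
    by (rule poly_ideal_mult[OF J _ k]) (auto intro: poly_ring_prod poly_ring_Var)
  finally show ?thesis
    unfolding saturation_in_def using p by blast
qed

lemma saturation_in_cancel_monomial:
  assumes J: "poly_ideal V J" and V: "finite V" "set ks \<subseteq> V" and p: "p \<in> poly_ring V"
    and kp: "prod_list (map Var ks) * p \<in> saturation_in (poly_ring V) J (\<Prod>v\<in>V. Var v)"
  shows "p \<in> saturation_in (poly_ring V) J (\<Prod>v\<in>V. Var v)"
  using V(2) kp
proof (induction ks)
  case (Cons k ks)
  have k: "k \<in> V" and ks: "set ks \<subseteq> V"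
    using Cons.prems(1) by auto
  have "prod_list (map Var ks) * p \<in> poly_ring V"
    using ks p by (intro poly_ring_mult poly_ring_prod_list poly_ring_Var) auto
  moreover have "Var k * (prod_list (map Var ks) * p) \<in> saturation_in (poly_ring V) J (\<Prod>v\<in>V. Var v)"
    using Cons.prems(2) by (simp add: mult.assoc)
  ultimately have "prod_list (map Var ks) * p \<in> saturation_in (poly_ring V) J (\<Prod>v\<in>V. Var v)"
    by (rule saturation_in_cancel_Var[OF J V(1) k])
  then show ?case
    using Cons.IH ks by blast
qed simp

subsection \<open>Evaluation of polynomials\<close>

definition eval_monomial :: "(nat \<Rightarrow> complex) \<Rightarrow> (nat \<Rightarrow>\<^sub>0 nat) \<Rightarrow> complex" where
  "eval_monomial z m = (\<Prod>v\<in>Poly_Mapping.keys m. z v ^ Poly_Mapping.lookup m v)"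

lemma eval_monomial_superset:
  assumes "finite T" "Poly_Mapping.keys m \<subseteq> T"
  shows "eval_monomial z m = (\<Prod>v\<in>T. z v ^ Poly_Mapping.lookup m v)"
  unfolding eval_monomial_def
  by (rule prod.mono_neutral_right[OF assms, symmetric]) (auto simp: in_keys_iff)

lemma eval_monomial_add: "eval_monomial z (a + b) = eval_monomial z a * eval_monomial z b"
proof -
  let ?T = "Poly_Mapping.keys a \<union> Poly_Mapping.keys b"
  have "eval_monomial z (a + b) = (\<Prod>v\<in>?T. z v ^ Poly_Mapping.lookup (a + b) v)"
    by (rule eval_monomial_superset) (simp_all add: Poly_Mapping.keys_add)
  also have "\<dots> = (\<Prod>v\<in>?T. z v ^ Poly_Mapping.lookup a v) * (\<Prod>v\<in>?T. z v ^ Poly_Mapping.lookup b v)"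
    by (simp add: lookup_add power_add prod.distrib)
  also have "\<dots> = eval_monomial z a * eval_monomial z b"
    using eval_monomial_superset[of ?T a z] eval_monomial_superset[of ?T b z] by simp
  finally show ?thesis .
qed

definition eval_mpoly :: "(nat \<Rightarrow> complex) \<Rightarrow> mpoly \<Rightarrow> complex" where
  "eval_mpoly z p = (\<Sum>m\<in>Poly_Mapping.keys p. Poly_Mapping.lookup p m * eval_monomial z m)"

lemma eval_mpoly_superset:
  assumes "finite S" "Poly_Mapping.keys p \<subseteq> S"
  shows "eval_mpoly z p = (\<Sum>m\<in>S. Poly_Mapping.lookup p m * eval_monomial z m)"
  unfolding eval_mpoly_def
  by (rule sum.mono_neutral_right[OF assms, symmetric]) (auto simp: in_keys_iff)

lemma eval_mpoly_add: "eval_mpoly z (p + q) = eval_mpoly z p + eval_mpoly z q"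
proof -
  let ?S = "Poly_Mapping.keys p \<union> Poly_Mapping.keys q"
  have "eval_mpoly z (p + q) = (\<Sum>m\<in>?S. Poly_Mapping.lookup (p + q) m * eval_monomial z m)"
    by (rule eval_mpoly_superset) (simp_all add: Poly_Mapping.keys_add)
  also have "\<dots> = eval_mpoly z p + eval_mpoly z q"
    using eval_mpoly_superset[of ?S p z] eval_mpoly_superset[of ?S q z]
    by (simp add: lookup_add distrib_right sum.distrib)
  finally show ?thesis .
qed

lemma eval_mpoly_single: "eval_mpoly z (Poly_Mapping.single m c) = c * eval_monomial z m"
  using eval_mpoly_superset[of "{m}" "Poly_Mapping.single m c" z] by simp

lemma eval_mpoly_zero: "eval_mpoly z 0 = 0"
  unfolding eval_mpoly_def by simp

lemma eval_mpoly_one: "eval_mpoly z 1 = 1"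
  using eval_mpoly_single[of z 0 1] by (simp add: eval_monomial_def)

lemma eval_mpoly_sum: "eval_mpoly z (sum f A) = (\<Sum>a\<in>A. eval_mpoly z (f a))"
proof (induction A rule: infinite_finite_induct)
  case (insert x F)
  then show ?case by (simp only: sum.insert[OF insert.hyps] eval_mpoly_add)
qed (simp_all add: eval_mpoly_zero)

lemma eval_mpoly_mult: "eval_mpoly z (p * q) = eval_mpoly z p * eval_mpoly z q"
proof -
  let ?P = "Poly_Mapping.keys p" and ?Q = "Poly_Mapping.keys q"
  have expand: "r = (\<Sum>m\<in>Poly_Mapping.keys r. Poly_Mapping.single m (Poly_Mapping.lookup r m))"
    for r :: mpoly
    by (rule poly_mapping_eqI) (simp add: lookup_sum lookup_single when_def in_keys_iff)
  have "p * q = (\<Sum>a\<in>?P. Poly_Mapping.single a (Poly_Mapping.lookup p a))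
      * (\<Sum>b\<in>?Q. Poly_Mapping.single b (Poly_Mapping.lookup q b))"
    using expand[of p] expand[of q] by simp
  also have "\<dots> = (\<Sum>a\<in>?P. \<Sum>b\<in>?Q.
      Poly_Mapping.single (a + b) (Poly_Mapping.lookup p a * Poly_Mapping.lookup q b))"
    by (simp add: sum_product mult_single)
  finally have "eval_mpoly z (p * q) = (\<Sum>a\<in>?P. \<Sum>b\<in>?Q.
      (Poly_Mapping.lookup p a * eval_monomial z a) * (Poly_Mapping.lookup q b * eval_monomial z b))"
    by (simp only: eval_mpoly_sum eval_mpoly_single eval_monomial_add ac_simps)
  also have "\<dots> = eval_mpoly z p * eval_mpoly z q"
    unfolding eval_mpoly_def by (simp add: sum_product)
  finally show ?thesis .
qed

lemma eval_mpoly_Var: "eval_mpoly z (Var i) = z i"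
  unfolding Var_def eval_mpoly_single eval_monomial_def by simp

lemma eval_mpoly_const_mpoly: "eval_mpoly z (const_mpoly c) = c"
  unfolding const_mpoly_def eval_mpoly_single eval_monomial_def by simp

interpretation eval_mpoly: comm_ring_hom "eval_mpoly z" for z
  by standard (simp_all only: eval_mpoly_add eval_mpoly_mult eval_mpoly_zero eval_mpoly_one)

lemma eval_mpoly_saturation_in_eq_0:
  assumes p: "p \<in> saturation_in (poly_ring V) (ideal_gen_in (poly_ring V) G) (\<Prod>v\<in>V. Var v)"
    and V: "finite V" and G: "\<And>g. g \<in> G \<Longrightarrow> eval_mpoly z g = 0" and z: "\<And>v. v \<in> V \<Longrightarrow> z v \<noteq> 0"
  shows "eval_mpoly z p = 0"
proof -
  obtain k F c where k: "(\<Prod>v\<in>V. Var v) ^ k * p = (\<Sum>g\<in>F. c g * g)" "F \<subseteq> G"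
    using p unfolding saturation_in_def ideal_gen_in_def by blast
  have "(\<Prod>v\<in>V. z v) ^ k * eval_mpoly z p = eval_mpoly z (\<Sum>g\<in>F. c g * g)"
    unfolding k(1)[symmetric] eval_mpoly.hom_mult eval_mpoly.hom_power eval_mpoly.hom_prod eval_mpoly_Var ..
  also have "\<dots> = 0"
    unfolding eval_mpoly.hom_sum eval_mpoly.hom_mult using k(2) G by (auto intro!: sum.neutral)
  finally have "(\<Prod>v\<in>V. z v) ^ k * eval_mpoly z p = 0" .
  moreover have "(\<Prod>v\<in>V. z v) \<noteq> 0"
    using V z by simp
  ultimately show ?thesis
    by simp
qed

subsection \<open>Minors\<close>

lemma rank_mat_sum_products_le:
  fixes f :: "nat \<Rightarrow> nat \<Rightarrow> 'a::field" and g :: "nat \<Rightarrow> nat \<Rightarrow> 'a"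
  shows "vec_space.rank nr (mat nr nc (\<lambda>(i, j). \<Sum>l<m. f i l * g l j)) \<le> m"
proof (induction m)
  case 0
  have "mat nr nc (\<lambda>(i, j). \<Sum>l<0. f i l * g l j) = 0\<^sub>m nr nc"
    by (rule eq_matI) auto
  then show ?case
    by (simp only: vec_space.rank_0I)
next
  case (Suc m)
  have split: "mat nr nc (\<lambda>(i, j). \<Sum>l<Suc m. f i l * g l j)
      = mat nr nc (\<lambda>(i, j). \<Sum>l<m. f i l * g l j) + mat nr nc (\<lambda>(i, j). f i m * g m j)"
    by (rule eq_matI) auto
  have "vec_space.rank nr (mat nr nc (\<lambda>(i, j). f i m * g m j)) \<le> 1"
    by (rule vec_space.rank_le_1_product_entries[where f = "\<lambda>i. f i m" and g = "g m"]) auto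
  moreover have "vec_space.rank nr (mat nr nc (\<lambda>(i, j). \<Sum>l<Suc m. f i l * g l j))
      \<le> vec_space.rank nr (mat nr nc (\<lambda>(i, j). \<Sum>l<m. f i l * g l j))
        + vec_space.rank nr (mat nr nc (\<lambda>(i, j). f i m * g m j))"
    unfolding split by (rule vec_space.rank_subadditive) auto
  ultimately show ?case
    using Suc.IH by simp
qed

lemma det_submatrix_eq_0_if_rank_less:
  fixes A :: "'a::field mat"
  assumes A: "A \<in> carrier_mat nr nc" and J: "J \<subseteq> {..<nc}" and rank: "vec_space.rank nr A < card J"
  shows "det (submatrix A I J) = 0"
proof (rule ccontr)
  assume "det (submatrix A I J) \<noteq> 0"
  then have "card {j. j < nc \<and> j \<in> J} \<le> vec_space.rank nr A"
    by (rule vec_space.rank_gt_minor[OF A])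
  moreover have "{j. j < nc \<and> j \<in> J} = J"
    using J by auto
  ultimately show False
    using rank by simp
qed

lemma submatrix_map_mat:
  assumes "I \<subseteq> {..<dim_row A}" "J \<subseteq> {..<dim_col A}"
  shows "submatrix (map_mat f A) I J = map_mat f (submatrix A I J)"
proof -
  have "{i. i < dim_row A \<and> i \<in> I} = I" "{j. j < dim_col A \<and> j \<in> J} = J"
    using assms by auto
  moreover have "i < card I \<Longrightarrow> pick I i < dim_row A" "j < card J \<Longrightarrow> pick J j < dim_col A" for i j
    using assms pick_in_set_le by blast+
  ultimately show ?thesis
    by (intro eq_matI) (simp_all add: submatrix_def)
qed

definition remove_nth :: "nat \<Rightarrow> 'a list \<Rightarrow> 'a list" where
  "remove_nth i xs = take i xs @ drop (Suc i) xs"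

lemma length_remove_nth: "i < length xs \<Longrightarrow> length (remove_nth i xs) = length xs - 1"
  unfolding remove_nth_def by simp

lemma nth_remove_nth:
  "i < length xs \<Longrightarrow> k < length xs - 1 \<Longrightarrow> remove_nth i xs ! k = xs ! (if k < i then k else Suc k)"
  unfolding remove_nth_def by (auto simp: nth_append min_def)

definition submatrix_list :: "'a mat \<Rightarrow> nat list \<Rightarrow> nat list \<Rightarrow> 'a mat" where
  "submatrix_list A xs ys = mat (length xs) (length ys) (\<lambda>(i, j). A $$ (xs ! i, ys ! j))"

lemma mat_delete_submatrix_list:
  assumes "i < length xs" "j < length ys"
  shows "mat_delete (submatrix_list A xs ys) i j = submatrix_list A (remove_nth i xs) (remove_nth j ys)"
  using assms
  by (intro eq_matI) (auto simp: mat_delete_def submatrix_list_def length_remove_nth nth_remove_nth)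

text \<open>Laplace expansion along the first column. Zero entries are skipped, so that the
  simplifier can evaluate minors of sparse symbolic matrices.\<close>
fun laplace_det :: "'a::comm_ring_1 mat \<Rightarrow> nat list \<Rightarrow> nat list \<Rightarrow> 'a" where
  "laplace_det A xs [] = 1"
| "laplace_det A xs (y # ys) = (\<Sum>i\<leftarrow>[0..<length xs].
      if A $$ (xs ! i, y) = 0 then 0
      else (-1) ^ i * A $$ (xs ! i, y) * laplace_det A (remove_nth i xs) ys)"

lemma det_submatrix_list:
  "length xs = length ys \<Longrightarrow> det (submatrix_list A xs ys) = laplace_det A xs ys"
proof (induction ys arbitrary: xs)
  case Nil
  then show ?case by (simp add: submatrix_list_def det_def)
next
  case (Cons y ys)
  let ?B = "submatrix_list A xs (y # ys)"
  have n: "length xs = Suc (length ys)"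
    using Cons.prems by simp
  have B: "?B \<in> carrier_mat (length xs) (length xs)"
    using Cons.prems by (simp add: submatrix_list_def)
  have "det ?B = (\<Sum>i<length xs. ?B $$ (i, 0) * cofactor ?B i 0)"
    by (rule laplace_expansion_column[OF B]) (simp add: n)
  also have "\<dots> = (\<Sum>i<length xs. (-1) ^ i * A $$ (xs ! i, y) * laplace_det A (remove_nth i xs) ys)"
  proof (rule sum.cong[OF refl])
    fix i assume i: "i \<in> {..<length xs}"
    have "cofactor ?B i 0 = (-1) ^ i * det (submatrix_list A (remove_nth i xs) ys)"
      unfolding cofactor_def using i by (simp add: mat_delete_submatrix_list remove_nth_def)
    also have "det (submatrix_list A (remove_nth i xs) ys) = laplace_det A (remove_nth i xs) ys"
      using i n by (intro Cons.IH) (simp add: length_remove_nth)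
    finally show "?B $$ (i, 0) * cofactor ?B i 0
        = (-1) ^ i * A $$ (xs ! i, y) * laplace_det A (remove_nth i xs) ys"
      using i by (simp add: submatrix_list_def)
  qed
  also have "\<dots> = (\<Sum>i<length xs. if A $$ (xs ! i, y) = 0 then 0
      else (-1) ^ i * A $$ (xs ! i, y) * laplace_det A (remove_nth i xs) ys)"
    by (rule sum.cong) simp_all
  also have "\<dots> = laplace_det A xs (y # ys)"
    by (simp add: sum_list_distinct_conv_sum_set atLeast0LessThan)
  finally show ?case .
qed

lemma pick_set_sorted:
  assumes sorted: "sorted_wrt (<) xs" and k: "k < length xs"
  shows "pick (set xs) k = xs ! k"
proof -
  have "{a \<in> set xs. a < xs ! k} = set (take k xs)"
  proof -
    have xs: "xs = take k xs @ xs ! k # drop (Suc k) xs"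
      using k by (rule id_take_nth_drop)
    then have "set xs = set (take k xs) \<union> insert (xs ! k) (set (drop (Suc k) xs))"
      by (metis set_append list.simps(15))
    moreover have "\<forall>a\<in>set (take k xs). a < xs ! k" "\<forall>a\<in>set (drop (Suc k) xs). xs ! k < a"
      using sorted xs by (metis sorted_wrt_append sorted_wrt.simps(2) list.set_intros(1))+
    ultimately show ?thesis
      by auto
  qed
  moreover have "card (set (take k xs)) = k"
    using sorted k by (simp add: distinct_card strict_sorted_iff)
  ultimately show ?thesis
    using pick_card_in_set[of "xs ! k" "set xs"] k by simp
qed

lemma submatrix_set_eq_submatrix_list:
  assumes "sorted_wrt (<) xs" "set xs \<subseteq> {..<dim_row A}" "sorted_wrt (<) ys" "set ys \<subseteq> {..<dim_col A}"
  shows "submatrix A (set xs) (set ys) = submatrix_list A xs ys"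
proof -
  have "{i. i < dim_row A \<and> i \<in> set xs} = set xs" "{j. j < dim_col A \<and> j \<in> set ys} = set ys"
    using assms(2,4) by auto
  moreover have "card (set xs) = length xs" "card (set ys) = length ys"
    using assms(1,3) by (simp_all add: distinct_card strict_sorted_iff)
  ultimately show ?thesis
    unfolding submatrix_def submatrix_list_def using assms(1,3)
    by (intro cong_mat) (simp_all add: pick_set_sorted)
qed

lemma laplace_det_in_minors:
  assumes "sorted_wrt (<) xs" "set xs \<subseteq> {..<dim_row A}" "sorted_wrt (<) ys" "set ys \<subseteq> {..<dim_col A}"
    and "length xs = k" "length ys = k"
  shows "laplace_det A xs ys \<in> minors k A"
proof -
  have "card (set xs) = k" "card (set ys) = k"
    using assms by (simp_all add: distinct_card strict_sorted_iff)
  moreover have "laplace_det A xs ys = det (submatrix A (set xs) (set ys))"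
    using assms by (simp add: submatrix_set_eq_submatrix_list det_submatrix_list)
  ultimately show ?thesis
    unfolding minors_def using assms(2,4) by blast
qed

subsection \<open>The slack matrix of the Perles polytope\<close>

lemma dim_perles_slack [simp]: "dim_row perles_slack = 12" "dim_col perles_slack = 34"
  unfolding perles_slack_def by simp_all

lemma perles_supp_less: "perles_supp i j \<Longrightarrow> i < 12 \<and> j < 34"
  unfolding perles_supp_def by simp

lemma perles_slack_entry:
  "i < 12 \<Longrightarrow> j < 34 \<Longrightarrow>
    perles_slack $$ (i, j) = (if perles_supp i j then Var (perles_var_index i j) else 0)"
  unfolding perles_slack_def by simp

definition perles_row_offset :: "nat \<Rightarrow> nat" where
  "perles_row_offset i = (\<Sum>r<i. card {c. c < 34 \<and> perles_supp r c})"

lemma perles_var_index_eq: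
  "perles_var_index i j = perles_row_offset i + card {c. c < j \<and> perles_supp i c}"
  unfolding perles_var_index_def perles_row_offset_def ..

lemma perles_row_offset_mono: "i \<le> i' \<Longrightarrow> perles_row_offset i \<le> perles_row_offset i'"
  unfolding perles_row_offset_def by (rule sum_mono2) auto

lemma perles_var_index_less_row_offset:
  assumes "perles_supp i j"
  shows "perles_var_index i j < perles_row_offset (Suc i)"
proof -
  have "{c. c < j \<and> perles_supp i c} \<subset> {c. c < 34 \<and> perles_supp i c}"
    using assms perles_supp_less[OF assms] by auto
  then have "card {c. c < j \<and> perles_supp i c} < card {c. c < 34 \<and> perles_supp i c}"
    by (rule psubset_card_mono[rotated]) simp
  then show ?thesis
    unfolding perles_var_index_eq perles_row_offset_def by simp
qed

lemma perles_row_offset_12: "perles_row_offset 12 = 120"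
proof -
  have card_eq: "card {c. c < n \<and> P c} = length (filter P [0..<n])" for n and P :: "nat \<Rightarrow> bool"
  proof -
    have "{c. c < n \<and> P c} = set (filter P [0..<n])"
      by auto
    then show ?thesis
      using distinct_card[of "filter P [0..<n]"] by simp
  qed
  have sum_eq: "(\<Sum>r<n. f r) = sum_list (map f [0..<n])" for n and f :: "nat \<Rightarrow> nat"
    by (induction n) simp_all
  show ?thesis
    unfolding perles_row_offset_def card_eq sum_eq
    by (simp add: upt_conv_Cons perles_supp_def perles_rows_def)
qed

lemma perles_var_index_less:
  assumes "perles_supp i j"
  shows "perles_var_index i j < 120"
proof -
  have "perles_row_offset (Suc i) \<le> perles_row_offset 12"
    using perles_supp_less[OF assms] by (intro perles_row_offset_mono) simp
  then show ?thesis
    using perles_var_index_less_row_offset[OF assms] perles_row_offset_12 by simp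
qed

lemma perles_var_index_less_of_less:
  assumes s: "perles_supp i j" "perles_supp i' j'" and less: "(i, j) < (i', j')"
  shows "perles_var_index i j < perles_var_index i' j'"
proof (cases "i < i'")
  case True
  then have "perles_row_offset (Suc i) \<le> perles_row_offset i'"
    by (intro perles_row_offset_mono) simp
  then show ?thesis
    using perles_var_index_less_row_offset[OF s(1)] perles_var_index_eq[of i' j'] by simp
next
  case False
  with less have ii: "i' = i" and jj: "j < j'"
    by (auto simp: less_prod_def)
  have "{c. c < j \<and> perles_supp i c} \<subset> {c. c < j' \<and> perles_supp i c}"
    using s(1) jj by auto
  then have "card {c. c < j \<and> perles_supp i c} < card {c. c < j' \<and> perles_supp i c}"
    by (rule psubset_card_mono[rotated]) simp
  then show ?thesis
    unfolding perles_var_index_eq ii by simp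
qed

lemma inj_on_perles_var_index: "inj_on (\<lambda>(i, j). perles_var_index i j) {(i, j). perles_supp i j}"
  by (intro strict_mono_on_imp_inj_on monotone_onI) (auto simp: perles_var_index_less_of_less)

lemma poly_ring_perles_slack_entry:
  "i < 12 \<Longrightarrow> j < 34 \<Longrightarrow> perles_slack $$ (i, j) \<in> poly_ring {..<120}"
  by (simp add: perles_slack_entry poly_ring_Var perles_var_index_less poly_ring_zero)

lemma poly_ideal_perles_minor_ideal:
  "poly_ideal {..<120} (ideal_gen_in (poly_ring {..<120}) (minors 10 perles_slack))"
  by (intro poly_ideal_ideal_gen_in poly_ring_minors poly_ring_perles_slack_entry) simp_all

lemma poly_ideal_perles_slack_ideal: "poly_ideal {..<120} perles_slack_ideal"
  unfolding perles_slack_ideal_def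
  by (intro poly_ideal_saturation_in poly_ideal_perles_minor_ideal poly_ring_prod poly_ring_Var) simp

lemma minors_subset_perles_slack_ideal: "minors 10 perles_slack \<subseteq> perles_slack_ideal"
  unfolding perles_slack_ideal_def
  using ideal_gen_in_generator subset_saturation_in[OF poly_ideal_perles_minor_ideal] by blast

definition perles_monomial :: "(nat \<times> nat) list \<Rightarrow> mpoly" where
  "perles_monomial l = prod_list (map (\<lambda>(i, j). Var (perles_var_index i j)) l)"

abbreviation perles_supported :: "(nat \<times> nat) list \<Rightarrow> bool" where
  "perles_supported l \<equiv> \<forall>(i, j)\<in>set l. perles_supp i j"

lemma perles_monomial_append: "perles_monomial (l @ l') = perles_monomial l * perles_monomial l'"
  unfolding perles_monomial_def by simp

lemma perles_monomial_concat: "perles_monomial (concat ls) = prod_list (map perles_monomial ls)"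
  by (induction ls) (simp_all add: perles_monomial_append, simp add: perles_monomial_def)

lemma perles_monomial_mset:
  assumes "mset l = mset l'"
  shows "perles_monomial l = perles_monomial l'"
proof -
  have "perles_monomial l = prod_mset (image_mset (\<lambda>(i, j). Var (perles_var_index i j)) (mset l))"
    for l
    unfolding perles_monomial_def by (simp flip: prod_mset_prod_list)
  then show ?thesis
    using assms by simp
qed

lemma poly_ring_perles_monomial: "perles_supported l \<Longrightarrow> perles_monomial l \<in> poly_ring {..<120}"
  unfolding perles_monomial_def
  by (intro poly_ring_prod_list) (auto intro!: poly_ring_Var perles_var_index_less)

lemma perles_slack_ideal_cancel_monomial:
  assumes "perles_supported l" "p \<in> poly_ring {..<120}" "perles_monomial l * p \<in> perles_slack_ideal"
  shows "p \<in> perles_slack_ideal"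
proof -
  let ?ks = "map (\<lambda>(i, j). perles_var_index i j) l"
  have "perles_monomial l = prod_list (map Var ?ks)"
    unfolding perles_monomial_def by (induction l) auto
  moreover have "set ?ks \<subseteq> {..<120}"
    using assms(1) by (auto intro: perles_var_index_less)
  ultimately show ?thesis
    using assms(2,3) saturation_in_cancel_monomial[OF poly_ideal_perles_minor_ideal, of ?ks p]
    unfolding perles_slack_ideal_def by simp
qed

definition perles_minor_factors :: "nat list \<Rightarrow> nat list \<Rightarrow> (nat \<times> nat) list \<Rightarrow> mpoly \<Rightarrow> bool" where
  "perles_minor_factors xs ys F q \<longleftrightarrow>
     sorted_wrt (<) xs \<and> set xs \<subseteq> {..<12} \<and> length xs = 10 \<and>
     sorted_wrt (<) ys \<and> set ys \<subseteq> {..<34} \<and> length ys = 10 \<and> perles_supported F \<and>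
     laplace_det perles_slack xs ys \<in> {perles_monomial F * q, - (perles_monomial F * q)}"

lemma perles_slack_ideal_of_minor:
  assumes minor: "perles_minor_factors xs ys F q" and q: "q \<in> poly_ring {..<120}"
  shows "q \<in> perles_slack_ideal"
proof -
  obtain s where s: "s = 1 \<or> s = -1" and det: "laplace_det perles_slack xs ys = s * (perles_monomial F * q)"
    using minor unfolding perles_minor_factors_def by (metis insertE mult_1 mult_minus1 singletonD)
  have "laplace_det perles_slack xs ys \<in> perles_slack_ideal"
    using minors_subset_perles_slack_ideal laplace_det_in_minors[of xs perles_slack ys] minor
    unfolding perles_minor_factors_def by auto
  moreover have "s \<in> poly_ring {..<120}"
    using s poly_ring_one poly_ring_uminus[OF poly_ring_one] by auto
  ultimately have "s * laplace_det perles_slack xs ys \<in> perles_slack_ideal"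
    by (intro poly_ideal_mult[OF poly_ideal_perles_slack_ideal])
  moreover have "s * laplace_det perles_slack xs ys = perles_monomial F * q"
    unfolding det using s by (elim disjE) simp_all
  moreover have "perles_supported F"
    using minor unfolding perles_minor_factors_def by blast
  ultimately show ?thesis
    using perles_slack_ideal_cancel_monomial[OF _ q] by simp
qed

subsection \<open>Golden integers\<close>

text \<open>The pair (a, b) stands for a + b\<phi> in \<int>[\<phi>], where \<phi>^2 = \<phi> + 1; this
  representation makes the arithmetic executable.\<close>
type_synonym zphi = "int \<times> int"

fun zphi_add :: "zphi \<Rightarrow> zphi \<Rightarrow> zphi" where
  "zphi_add (a, b) (c, d) = (a + c, b + d)"

fun zphi_mult :: "zphi \<Rightarrow> zphi \<Rightarrow> zphi" where
  "zphi_mult (a, b) (c, d) = (a * c + b * d, a * d + b * c + b * d)"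

definition zphi_sum :: "zphi list \<Rightarrow> zphi" where
  "zphi_sum xs = foldr zphi_add xs (0, 0)"

definition zphi_prod :: "zphi list \<Rightarrow> zphi" where
  "zphi_prod xs = foldr zphi_mult xs (1, 0)"

fun zphi_norm :: "zphi \<Rightarrow> int" where
  "zphi_norm (a, b) = a * a + a * b - b * b"

fun zphi_embed :: "complex \<Rightarrow> zphi \<Rightarrow> complex" where
  "zphi_embed r (a, b) = of_int a + of_int b * r"

definition golden_root :: "complex \<Rightarrow> bool" where
  "golden_root r \<longleftrightarrow> r * r = r + 1"

lemma golden_root_conj: "golden_root r \<Longrightarrow> golden_root (1 - r)"
  unfolding golden_root_def by (simp add: algebra_simps)

lemma golden_root_neq_1: "golden_root r \<Longrightarrow> r \<noteq> 1"
  unfolding golden_root_def by auto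

lemma zphi_embed_add: "zphi_embed r (zphi_add x y) = zphi_embed r x + zphi_embed r y"
  by (cases x; cases y) (simp add: algebra_simps)

lemma zphi_embed_mult:
  assumes "golden_root r"
  shows "zphi_embed r (zphi_mult x y) = zphi_embed r x * zphi_embed r y"
proof (cases x; cases y)
  fix a b c d assume xy: "x = (a, b)" "y = (c, d)"
  have "zphi_embed r x * zphi_embed r y = of_int (a * c) + of_int (a * d + b * c) * r + of_int (b * d) * (r * r)"
    unfolding xy by (simp add: algebra_simps)
  then show ?thesis
    using assms unfolding xy golden_root_def by (simp add: algebra_simps)
qed

lemma zphi_embed_sum: "zphi_embed r (zphi_sum xs) = sum_list (map (zphi_embed r) xs)"
  unfolding zphi_sum_def by (induction xs) (simp_all add: zphi_embed_add)

lemma zphi_embed_prod: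
  "golden_root r \<Longrightarrow> zphi_embed r (zphi_prod xs) = prod_list (map (zphi_embed r) xs)"
  unfolding zphi_prod_def by (induction xs) (simp_all add: zphi_embed_mult)

lemma zphi_embed_norm:
  assumes "golden_root r"
  shows "zphi_embed r x * zphi_embed (1 - r) x = of_int (zphi_norm x)"
proof (cases x)
  case (Pair a b)
  have "zphi_embed r x * zphi_embed (1 - r) x = of_int (a * a + a * b) + of_int (b * b) * (r - r * r)"
    unfolding Pair by (simp add: algebra_simps)
  then show ?thesis
    using assms unfolding Pair golden_root_def by simp
qed

lemma zphi_embed_neq_0: "golden_root r \<Longrightarrow> zphi_norm x \<noteq> 0 \<Longrightarrow> zphi_embed r x \<noteq> 0"
  using zphi_embed_norm[of r x] by auto

definition golden_ratio :: complex where
  "golden_ratio = (1 + sqrt 5) / 2"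

lemma golden_root_golden_ratio: "golden_root golden_ratio"
proof -
  have "complex_of_real (sqrt 5) * complex_of_real (sqrt 5) = 5"
    by (simp flip: of_real_mult)
  then show ?thesis
    unfolding golden_root_def golden_ratio_def by (simp add: field_simps)
qed

lemma golden_ratio_neq_conj: "golden_ratio \<noteq> 1 - golden_ratio"
  unfolding golden_ratio_def by (simp add: field_simps)

subsection \<open>Two points of the slack variety\<close>

text \<open>A factorization through \<int>[\<phi>]^9 of a 12 \<times> 34 matrix with exactly the support of the
  slack matrix.\<close>
definition perles_left_factor :: "zphi list list" where
  "perles_left_factor =
    [[(1, 0), (0, 0), (0, 0), (0, 0), (0, 0), (0, 0), (0, 0), (0, 0), (0, 0)],
     [(0, 0), (1, 0), (0, 0), (0, 0), (0, 0), (0, 0), (0, 0), (0, 0), (0, 0)],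
     [(0, 0), (0, 0), (1, 0), (0, 0), (0, 0), (0, 0), (0, 0), (0, 0), (0, 0)],
     [(0, 0), (0, 0), (0, 0), (1, 0), (0, 0), (0, 0), (0, 0), (0, 0), (0, 0)],
     [(0, 0), (0, 0), (0, 0), (0, 0), (1, 0), (0, 0), (0, 0), (0, 0), (0, 0)],
     [(-1, -1), (0, -1), (-1, 0), (-1, -1), (-1, 0), (-1, 0), (0, 0), (0, 0), (-1, -1)],
     [(-1, 0), (-1, 0), (1, -1), (0, 0), (-1, 0), (0, 0), (-1, 0), (0, 0), (-1, 0)],
     [(-1, 0), (-1, 0), (-1, 0), (-1, 0), (-1, 0), (0, 0), (0, 0), (-1, 0), (0, -1)],
     [(0, 0), (0, 0), (0, 0), (0, 0), (0, 0), (1, 0), (0, 0), (0, 0), (0, 0)],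
     [(0, 0), (0, 0), (0, 0), (0, 0), (0, 0), (0, 0), (1, 0), (0, 0), (0, 0)],
     [(0, 0), (0, 0), (0, 0), (0, 0), (0, 0), (0, 0), (0, 0), (1, 0), (0, 0)],
     [(0, 0), (0, 0), (0, 0), (0, 0), (0, 0), (0, 0), (0, 0), (0, 0), (1, 0)]]"

definition perles_right_factor :: "zphi list list" where
  "perles_right_factor =
    [[(0, 0), (0, 0), (0, 0), (-1, 0), (1, 1), (-1, -1), (0, 0), (0, 0), (0, 0), (0, 0), (0, 0),
      (0, 0), (0, 0), (1, -1), (2, -1), (-1, -1), (1, -1), (1, 0), (-1, 0), (1, 0), (1, 0), (0, 0),
      (0, 0), (0, 0), (0, 0), (0, 0), (0, 0), (0, 0), (0, 0), (0, 0), (0, 0), (0, 0), (0, 0),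
      (0, 0)],
     [(0, 0), (0, 0), (0, 0), (1, 0), (0, 0), (0, 0), (1, 0), (-1, 0), (-1, -1), (0, 0), (0, 0),
      (0, 0), (0, 0), (0, 1), (-2, 1), (1, 1), (0, 1), (0, 0), (0, 0), (0, 0), (0, 0), (-2, 1),
      (1, 1), (1, 1), (-1, 0), (0, 0), (0, 0), (0, 0), (0, 0), (0, 0), (0, 0), (0, 0), (0, 0),
      (0, 0)],
     [(0, 0), (0, 0), (0, 0), (0, 0), (0, 0), (0, 0), (0, -1), (0, 0), (0, 0), (1, 0), (1, 0),
      (0, 0), (0, 0), (-1, 0), (-1, 1), (0, 0), (0, 0), (-1, 0), (1, 1), (0, 0), (0, 0), (-2, 1),
      (0, 0), (0, 0), (0, 0), (0, 1), (1, 0), (0, 0), (0, 0), (0, 0), (0, 0), (0, 0), (0, 0),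
      (0, 0)],
     [(0, 0), (0, 0), (0, 0), (0, 0), (-1, -1), (0, 0), (0, 0), (0, 0), (0, 0), (0, 0), (0, 0),
      (0, -1), (1, 0), (0, 0), (0, 0), (1, 0), (-1, 1), (0, 0), (0, 0), (-1, 1), (0, 0), (0, 0),
      (1, -1), (0, -1), (0, 0), (0, 0), (0, 0), (1, 0), (1, 0), (0, 1), (0, 0), (0, 0), (0, 0),
      (0, 0)],
     [(0, 0), (0, 0), (0, 0), (0, 0), (0, 0), (0, 0), (0, 0), (1, 0), (0, 0), (-1, 0), (0, 0),
      (-1, -1), (0, 0), (0, 0), (0, 0), (0, 0), (0, 0), (0, 0), (0, 0), (0, 0), (0, 0), (2, -1),
      (-1, -1), (0, 0), (0, 0), (1, -1), (0, 0), (-1, 0), (-1, -1), (0, 0), (1, 1), (1, 0), (1, 0),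
      (0, 0)],
     [(-1, 0), (0, 0), (0, 0), (1, 0), (0, 0), (0, 0), (0, 0), (-1, 1), (0, 0), (0, 0), (0, 0),
      (0, 0), (0, 0), (0, 0), (0, 0), (0, 0), (0, 0), (0, 0), (0, 0), (0, 0), (-1, -1), (0, 0),
      (0, 0), (0, 0), (0, 1), (0, 0), (0, 0), (0, -1), (0, 0), (0, 0), (0, 0), (-1, 0), (0, 1),
      (0, 0)],
     [(0, 0), (-1, 0), (0, 0), (0, 0), (-1, -1), (0, 0), (0, 0), (0, 0), (0, 0), (2, -1), (0, 0),
      (0, 0), (0, 0), (-2, 1), (0, 0), (0, 0), (0, 0), (-2, 1), (1, -1), (0, 0), (-1, 0), (0, 0),
      (0, 0), (0, 0), (0, 0), (0, 0), (1, -1), (1, 0), (1, 1), (0, 0), (0, 0), (-1, 0), (0, 0),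
      (0, 0)],
     [(0, 0), (0, 0), (-1, 0), (0, 0), (0, 0), (0, 0), (-1, 1), (0, 0), (0, 0), (0, 0), (0, 0),
      (0, 0), (-1, 0), (0, 0), (0, 0), (-1, 0), (0, 0), (0, 0), (0, 0), (0, 0), (0, 0), (0, 0),
      (-1, 1), (-1, 0), (1, 0), (0, 0), (-1, 0), (0, 0), (0, 1), (0, 0), (0, 0), (0, 0), (0, 0),
      (0, 0)],
     [(0, 0), (0, 0), (0, 0), (0, 0), (0, 0), (1, 1), (0, 0), (0, 0), (0, 1), (0, 0), (1, -1),
      (1, 1), (0, 0), (0, 0), (-2, 1), (0, 0), (-1, 0), (0, 0), (0, 0), (-1, 0), (0, 0), (-3, 2),
      (0, 0), (0, 0), (0, 0), (-2, 1), (0, 0), (0, 0), (0, 0), (-1, 0), (-1, 0), (0, 0), (-1, 0),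
      (-1, 0)]]"

definition perles_factor_entry :: "nat \<Rightarrow> nat \<Rightarrow> zphi" where
  "perles_factor_entry i j =
     zphi_sum (map (\<lambda>l. zphi_mult (perles_left_factor ! i ! l) (perles_right_factor ! l ! j)) [0..<9])"

lemma perles_factor_entry_support:
  "list_all (\<lambda>i. list_all (\<lambda>j.
      (perles_supp i j \<longrightarrow> zphi_norm (perles_factor_entry i j) \<noteq> 0)
      \<and> (\<not> perles_supp i j \<longrightarrow> perles_factor_entry i j = (0, 0))) [0..<34]) [0..<12]"
  by code_simp

lemma perles_factor_entry_cases:
  assumes "i < 12" "j < 34"
  shows "(perles_supp i j \<longrightarrow> zphi_norm (perles_factor_entry i j) \<noteq> 0)
      \<and> (\<not> perles_supp i j \<longrightarrow> perles_factor_entry i j = (0, 0))"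
  using perles_factor_entry_support assms unfolding list_all_iff by simp

lemma perles_factor_entry_norm: "perles_supp i j \<Longrightarrow> zphi_norm (perles_factor_entry i j) \<noteq> 0"
  using perles_factor_entry_cases perles_supp_less by blast

lemma perles_factor_entry_zero:
  "i < 12 \<Longrightarrow> j < 34 \<Longrightarrow> \<not> perles_supp i j \<Longrightarrow> perles_factor_entry i j = (0, 0)"
  using perles_factor_entry_cases by blast

lemma zphi_embed_perles_factor_entry:
  "golden_root r \<Longrightarrow> zphi_embed r (perles_factor_entry i j)
     = (\<Sum>l<9. zphi_embed r (perles_left_factor ! i ! l) * zphi_embed r (perles_right_factor ! l ! j))"
  unfolding perles_factor_entry_def zphi_embed_sum
  by (simp add: zphi_embed_mult sum_list_distinct_conv_sum_set atLeast0LessThan)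

text \<open>The variable of entry (i, j) is sent to that entry of the factorized matrix, with \<phi>
  mapped to r; the default value 1 only serves to keep the point in the torus.\<close>
definition perles_point :: "complex \<Rightarrow> nat \<Rightarrow> complex" where
  "perles_point r v =
    (if v \<in> (\<lambda>(i, j). perles_var_index i j) ` {(i, j). perles_supp i j}
     then zphi_embed r (case_prod perles_factor_entry
       (inv_into {(i, j). perles_supp i j} (\<lambda>(i, j). perles_var_index i j) v))
     else 1)"

lemma perles_point_var_index:
  "perles_supp i j \<Longrightarrow> perles_point r (perles_var_index i j) = zphi_embed r (perles_factor_entry i j)"
  unfolding perles_point_def using inv_into_f_f[OF inj_on_perles_var_index, of "(i, j)"] by auto

lemma perles_point_neq_0:
  assumes "golden_root r"
  shows "perles_point r v \<noteq> 0"
proof (cases "v \<in> (\<lambda>(i, j). perles_var_index i j) ` {(i, j). perles_supp i j}")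
  case True
  then obtain i j where "perles_supp i j" "v = perles_var_index i j"
    by auto
  then show ?thesis
    using zphi_embed_neq_0[OF assms perles_factor_entry_norm] perles_point_var_index by simp
qed (simp add: perles_point_def)

definition perles_golden_matrix :: "complex \<Rightarrow> complex mat" where
  "perles_golden_matrix r = mat 12 34 (\<lambda>(i, j).
    \<Sum>l<9. zphi_embed r (perles_left_factor ! i ! l) * zphi_embed r (perles_right_factor ! l ! j))"

lemma map_mat_eval_perles_slack:
  assumes "golden_root r"
  shows "map_mat (eval_mpoly (perles_point r)) perles_slack = perles_golden_matrix r"
proof (rule eq_matI)
  fix i j assume "i < dim_row (perles_golden_matrix r)" "j < dim_col (perles_golden_matrix r)"
  then have ij: "i < 12" "j < 34"
    by (simp_all add: perles_golden_matrix_def)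
  have "eval_mpoly (perles_point r) (perles_slack $$ (i, j)) = zphi_embed r (perles_factor_entry i j)"
    using perles_slack_entry[OF ij] perles_point_var_index perles_factor_entry_zero[OF ij]
    by (simp add: eval_mpoly_Var)
  then show "map_mat (eval_mpoly (perles_point r)) perles_slack $$ (i, j) = perles_golden_matrix r $$ (i, j)"
    using ij zphi_embed_perles_factor_entry[OF assms] by (simp add: perles_golden_matrix_def)
qed (simp_all add: perles_golden_matrix_def)

lemma eval_perles_minor:
  assumes "golden_root r" "d \<in> minors 10 perles_slack"
  shows "eval_mpoly (perles_point r) d = 0"
proof -
  obtain I J where d: "d = det (submatrix perles_slack I J)"
    and IJ: "I \<subseteq> {..<12}" "J \<subseteq> {..<34}" "card J = 10"
    using assms(2) unfolding minors_def by auto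
  have "eval_mpoly (perles_point r) d = det (submatrix (map_mat (eval_mpoly (perles_point r)) perles_slack) I J)"
    unfolding d using IJ by (simp add: submatrix_map_mat)
  also have "\<dots> = 0"
    unfolding map_mat_eval_perles_slack[OF assms(1)] perles_golden_matrix_def
    by (rule det_submatrix_eq_0_if_rank_less[where nr = 12 and nc = 34])
      (use IJ in \<open>auto intro: le_less_trans[OF rank_mat_sum_products_le]\<close>)
  finally show ?thesis .
qed

lemma eval_perles_slack_ideal:
  "golden_root r \<Longrightarrow> p \<in> perles_slack_ideal \<Longrightarrow> eval_mpoly (perles_point r) p = 0"
  unfolding perles_slack_ideal_def
  by (erule eval_mpoly_saturation_in_eq_0) (simp_all add: eval_perles_minor perles_point_neq_0)

lemma eval_perles_monomial:
  "golden_root r \<Longrightarrow> perles_supported l \<Longrightarrow>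
    eval_mpoly (perles_point r) (perles_monomial l)
      = zphi_embed r (zphi_prod (map (\<lambda>(i, j). perles_factor_entry i j) l))"
  unfolding perles_monomial_def zphi_embed_prod
  by (induction l) (auto simp: eval_mpoly.hom_mult eval_mpoly_Var perles_point_var_index)

subsection \<open>Relations in the slack ideal\<close>

definition perles_a :: mpoly where "perles_a = perles_monomial [(2, 25), (7, 2), (10, 6), (11, 32)]"
definition perles_b :: mpoly where "perles_b = perles_monomial [(2, 6), (7, 32), (10, 2), (11, 25)]"
definition perles_c :: mpoly where "perles_c = perles_monomial [(2, 6), (7, 25), (10, 2), (11, 32)]"

lemma poly_ring_perles_abc:
  "perles_a \<in> poly_ring {..<120}" "perles_b \<in> poly_ring {..<120}" "perles_c \<in> poly_ring {..<120}"
  unfolding perles_a_def perles_b_def perles_c_def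
  by (intro poly_ring_perles_monomial; simp add: perles_supp_def perles_rows_def)+

lemma perles_trinomial: "perles_a - perles_b + perles_c \<in> perles_slack_ideal"
proof (rule perles_slack_ideal_of_minor)
  show "perles_minor_factors [0, 2, 3, 5, 6, 7, 8, 9, 10, 11] [1, 2, 3, 6, 7, 13, 25, 26, 28, 32]
    [(0, 3), (3, 28), (5, 26), (6, 1), (8, 7), (9, 13)] (perles_a - perles_b + perles_c)"
    unfolding perles_minor_factors_def perles_a_def perles_b_def perles_c_def
    by (simp add: perles_slack_entry perles_supp_def perles_rows_def upt_conv_Cons remove_nth_def)
      (simp add: perles_monomial_def algebra_simps)
  show "perles_a - perles_b + perles_c \<in> poly_ring {..<120}"
    using poly_ring_perles_abc by (intro poly_ring_add poly_ring_diff)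
qed

text \<open>An entry (xs, ys, F, a, b) records that the 10-minor with rows xs and columns ys is
  \<plusminus>x^F (x^a - x^b), writing x^l for perles_monomial l.\<close>
definition perles_binomial_minors ::
  "(nat list \<times> nat list \<times> (nat \<times> nat) list \<times> (nat \<times> nat) list \<times> (nat \<times> nat) list) list" where
  "perles_binomial_minors =
    [([1, 2, 3, 4, 5, 6, 8, 9, 10, 11], [0, 5, 8, 14, 16, 23, 25, 27, 30, 33],
       [(3, 16), (5, 33), (8, 0), (9, 27), (10, 23), (11, 5)],
       [(1, 14), (2, 25), (4, 30), (6, 8)], [(1, 8), (2, 14), (4, 25), (6, 30)]),
     ([1, 2, 3, 4, 5, 6, 8, 9, 10, 11], [1, 4, 5, 7, 11, 12, 14, 18, 22, 30],
       [(1, 14), (2, 18), (5, 12), (8, 7), (10, 22), (11, 5)],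
       [(3, 4), (4, 11), (6, 30), (9, 1)], [(3, 11), (4, 30), (6, 1), (9, 4)]),
     ([0, 1, 2, 4, 5, 6, 8, 9, 10, 11], [0, 2, 7, 8, 11, 12, 14, 25, 26, 32],
       [(0, 14), (1, 7), (2, 25), (5, 12), (6, 8), (8, 0), (9, 26), (10, 2)],
       [(4, 32), (11, 11)], [(4, 11), (11, 32)]),
     ([0, 1, 3, 4, 6, 7, 8, 9, 10, 11], [0, 4, 10, 13, 23, 25, 29, 31, 32, 33],
       [(0, 4), (1, 13), (3, 29), (6, 33), (8, 0), (9, 31), (10, 23), (11, 10)],
       [(4, 25), (7, 32)], [(4, 32), (7, 25)]),
     ([2, 3, 4, 5, 6, 7, 8, 9, 10, 11], [0, 3, 4, 6, 7, 8, 11, 14, 16, 18],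
       [(2, 14), (4, 7), (5, 0), (6, 8), (7, 18), (8, 3), (9, 4), (10, 6)],
       [(3, 11), (11, 16)], [(3, 16), (11, 11)]),
     ([0, 1, 3, 5, 6, 7, 8, 9, 10, 11], [2, 3, 6, 7, 15, 21, 24, 25, 28, 33],
       [(0, 3), (3, 15), (5, 33), (6, 24), (8, 7), (9, 28)],
       [(1, 21), (7, 2), (10, 6), (11, 25)], [(1, 6), (7, 25), (10, 2), (11, 21)]),
     ([1, 2, 3, 4, 5, 6, 8, 9, 10, 11], [1, 2, 5, 6, 7, 11, 14, 17, 21, 23],
       [(3, 11), (4, 21), (5, 17), (6, 23), (8, 7), (9, 1), (10, 2), (11, 5)],
       [(1, 6), (2, 14)], [(1, 14), (2, 6)]),
     ([0, 1, 3, 4, 5, 7, 8, 9, 10, 11], [1, 7, 8, 9, 15, 21, 23, 24, 31, 33],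
       [(0, 15), (3, 23), (4, 9), (5, 33), (7, 31), (8, 7), (9, 1), (10, 24)],
       [(1, 8), (11, 21)], [(1, 21), (11, 8)]),
     ([2, 3, 4, 5, 6, 7, 8, 9, 10, 11], [1, 4, 7, 8, 12, 13, 16, 19, 21, 31],
       [(2, 13), (4, 21), (5, 19), (7, 31), (8, 7), (10, 12)],
       [(3, 16), (6, 1), (9, 4), (11, 8)], [(3, 4), (6, 8), (9, 1), (11, 16)])]"

definition perles_binomials :: "((nat \<times> nat) list \<times> (nat \<times> nat) list) list" where
  "perles_binomials = map (\<lambda>(xs, ys, F, a, b). (a, b)) perles_binomial_minors"

lemma perles_binomial_minors_factor:
  "list_all (\<lambda>(xs, ys, F, a, b). perles_supported a \<and> perles_supported b \<and>
      perles_minor_factors xs ys F (perles_monomial a - perles_monomial b)) perles_binomial_minors"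
  unfolding perles_binomial_minors_def perles_minor_factors_def list.pred_inject prod.case
  by (intro conjI; simp add: perles_slack_entry perles_supp_def perles_rows_def upt_conv_Cons remove_nth_def;
      simp add: perles_monomial_def algebra_simps)

lemma perles_binomial:
  assumes "(a, b) \<in> set perles_binomials"
  shows "perles_supported a" "perles_supported b"
    and "perles_monomial a - perles_monomial b \<in> perles_slack_ideal"
proof -
  obtain xs ys F where "(xs, ys, F, a, b) \<in> set perles_binomial_minors"
    using assms unfolding perles_binomials_def by auto
  then have facts: "perles_supported a \<and> perles_supported b
      \<and> perles_minor_factors xs ys F (perles_monomial a - perles_monomial b)"
    using perles_binomial_minors_factor unfolding list_all_iff by fastforce
  show a: "perles_supported a"
    using facts by (rule conjunct1)
  show b: "perles_supported b"
    using facts[THEN conjunct2] by (rule conjunct1)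
  show "perles_monomial a - perles_monomial b \<in> perles_slack_ideal"
    using facts[THEN conjunct2, THEN conjunct2]
      poly_ring_diff[OF poly_ring_perles_monomial[OF a] poly_ring_perles_monomial[OF b]]
    by (rule perles_slack_ideal_of_minor)
qed

lemma perles_binomial_product:
  "perles_monomial (concat (map fst perles_binomials)) - perles_monomial (concat (map snd perles_binomials))
     \<in> perles_slack_ideal"
proof -
  let ?ps = "map (\<lambda>(a, b). (perles_monomial a, perles_monomial b)) perles_binomials"
  have "prod_list (map fst ?ps) - prod_list (map snd ?ps) \<in> perles_slack_ideal"
    by (rule poly_ideal_prod_list_diff[OF poly_ideal_perles_slack_ideal])
      (auto intro: poly_ring_perles_monomial dest: perles_binomial)
  then show ?thesis
    by (simp add: perles_monomial_concat comp_def case_prod_beta)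
qed

lemma perles_binomial_product_identity:
  "perles_monomial (concat (map fst perles_binomials)) * (perles_c * perles_c)
     = perles_monomial (concat (map snd perles_binomials)) * (perles_a * perles_b)"
  unfolding perles_a_def perles_b_def perles_c_def perles_monomial_append[symmetric]
  by (rule perles_monomial_mset) code_simp

lemma perles_binomial_ab: "perles_a * perles_b - perles_c * perles_c \<in> perles_slack_ideal"
proof -
  let ?L = "perles_monomial (concat (map fst perles_binomials))"
  let ?R = "perles_monomial (concat (map snd perles_binomials))"
  have "perles_c * perles_c * (?L - ?R) \<in> perles_slack_ideal"
    using poly_ring_perles_abc
    by (intro poly_ideal_mult[OF poly_ideal_perles_slack_ideal _ perles_binomial_product] poly_ring_mult)
  also have "perles_c * perles_c * (?L - ?R) = ?R * (perles_a * perles_b - perles_c * perles_c)"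
    using perles_binomial_product_identity by (simp add: algebra_simps)
  finally have "?R * (perles_a * perles_b - perles_c * perles_c) \<in> perles_slack_ideal" .
  moreover have "perles_supported (concat (map snd perles_binomials))"
    by (fastforce dest: perles_binomial(2))
  moreover have "perles_a * perles_b - perles_c * perles_c \<in> poly_ring {..<120}"
    using poly_ring_perles_abc by (intro poly_ring_diff poly_ring_mult)
  ultimately show ?thesis
    using perles_slack_ideal_cancel_monomial by blast
qed

lemma perles_quadric: "perles_a * perles_a + perles_a * perles_c - perles_c * perles_c \<in> perles_slack_ideal"
proof -
  have "perles_a * (perles_a - perles_b + perles_c) \<in> perles_slack_ideal"
    by (rule poly_ideal_mult[OF poly_ideal_perles_slack_ideal poly_ring_perles_abc(1) perles_trinomial])
  then have "perles_a * (perles_a - perles_b + perles_c) + (perles_a * perles_b - perles_c * perles_c)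
      \<in> perles_slack_ideal"
    by (rule poly_ideal_add[OF poly_ideal_perles_slack_ideal _ perles_binomial_ab])
  then show ?thesis
    by (simp add: algebra_simps)
qed

definition golden_factor :: "complex \<Rightarrow> mpoly" where
  "golden_factor r = perles_a + const_mpoly r * perles_c"

lemma golden_factor_mult_conj:
  assumes "golden_root r"
  shows "golden_factor r * golden_factor (1 - r) = perles_a * perles_a + perles_a * perles_c - perles_c * perles_c"
proof -
  have "golden_factor r * golden_factor (1 - r) = perles_a * perles_a
      + (const_mpoly r + const_mpoly (1 - r)) * (perles_a * perles_c)
      + const_mpoly r * const_mpoly (1 - r) * (perles_c * perles_c)"
    unfolding golden_factor_def by (simp add: algebra_simps)
  moreover have "const_mpoly r + const_mpoly (1 - r) = 1" "const_mpoly r * const_mpoly (1 - r) = - 1"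
    using assms unfolding golden_root_def const_mpoly_add[symmetric] const_mpoly_mult[symmetric]
    by (simp_all add: const_mpoly_one const_mpoly_uminus algebra_simps)
  ultimately show ?thesis
    by simp
qed

lemma eval_golden_factor:
  assumes "golden_root r'"
  shows "eval_mpoly (perles_point r') (golden_factor r) = (r - r') * (r' - 1)"
proof -
  have "zphi_prod (map (\<lambda>(i, j). perles_factor_entry i j) [(2, 25), (7, 2), (10, 6), (11, 32)]) = (-1, 0)"
    "zphi_prod (map (\<lambda>(i, j). perles_factor_entry i j) [(2, 6), (7, 25), (10, 2), (11, 32)]) = (-1, 1)"
    by code_simp+
  then have a: "eval_mpoly (perles_point r') perles_a = -1"
    and c: "eval_mpoly (perles_point r') perles_c = r' - 1"
    unfolding perles_a_def perles_c_def
    by (simp_all add: eval_perles_monomial[OF assms] perles_supp_def perles_rows_def)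
  have "eval_mpoly (perles_point r') (golden_factor r) = (r - r') * (r' - 1) + (r' * r' - r' - 1)"
    unfolding golden_factor_def eval_mpoly.hom_add eval_mpoly.hom_mult eval_mpoly_const_mpoly a c
    by (simp add: algebra_simps)
  then show ?thesis
    using assms unfolding golden_root_def by simp
qed

lemma golden_factor_notin_perles_slack_ideal:
  assumes "golden_root r" "golden_root r'" "r \<noteq> r'"
  shows "golden_factor r \<notin> perles_slack_ideal"
proof
  assume "golden_factor r \<in> perles_slack_ideal"
  then have "(r - r') * (r' - 1) = 0"
    using eval_perles_slack_ideal[OF assms(2)] eval_golden_factor[OF assms(2)] by metis
  then show False
    using assms(3) golden_root_neq_1[OF assms(2)] by simp
qed

theorem theorem5p3:
  shows "\<not> prime_ideal_in (poly_ring {..<120}) perles_slack_ideal"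
proof
  assume prime: "prime_ideal_in (poly_ring {..<120}) perles_slack_ideal"
  let ?\<phi> = golden_ratio
  have roots: "golden_root ?\<phi>" "golden_root (1 - ?\<phi>)"
    using golden_root_golden_ratio golden_root_conj by blast+
  have "golden_factor ?\<phi> * golden_factor (1 - ?\<phi>) \<in> perles_slack_ideal"
    unfolding golden_factor_mult_conj[OF roots(1)] by (rule perles_quadric)
  moreover have "golden_factor r \<in> poly_ring {..<120}" for r
    unfolding golden_factor_def
    using poly_ring_perles_abc by (intro poly_ring_add poly_ring_mult poly_ring_const_mpoly)
  ultimately have "golden_factor ?\<phi> \<in> perles_slack_ideal \<or> golden_factor (1 - ?\<phi>) \<in> perles_slack_ideal"
    using prime unfolding prime_ideal_in_def by blast
  then show False
    using golden_factor_notin_perles_slack_ideal roots golden_ratio_neq_conj by metis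
qed

end
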